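(* Let $s=(s_m)_{m\ge1}$ be a scale with $S=\mathrm{lcm}(s_m)$ infinite. Then the functions $\{1_{(x)}\}_{x=0,1,2,\dots}$ freely generate the abelian group $C(\mathbb Z_S,\mathbb Z)$ of continuous integer-valued functions on $\mathbb Z_S$: every $f\in C(\mathbb Z_S,\mathbb Z)$ can be written uniquely as a finite sum $f=\sum_{x\ge0}f_{(x)}1_{(x)}$ with $f_{(x)}\in\mathbb Z$.
   Context: A scale is a sequence of positive integers $(s_m)_{m\ge1}$ with $s_m\mid s_{m+1}$ and $s_m<s_{m+1}$; set $s_0=1$. $\mathbb Z_S=\varprojlim\mathbb Z/s_m\mathbb Z$ (sequences $(y_m)$ with $y_{m+1}\equiv y_m \bmod s_m$, product topology), containing $\mathbb Z$ as a dense subgroup. For $w\in\mathbb Z_S$ and $n\ge0$, "$s_n\mid w$" means the image of $w$ in $\mathbb Z/s_n\mathbb Z$ is $0$. For $n\ge0$ and integer $0\le x<s_n$, $1_{(n,x)}$ is the function on $\mathbb Z_S$ equal to $1$ at $z$ if $s_n\mid(z-x)$ and $0$ otherwise. For integers $x\ge1$ let $n(x)\ge1$ be defined by $s_{n(x)-1}\le x<s_{n(x)}$, and set $1_{(x)}:=1_{(n(x),x)}$; also $1_{(0)}:=1_{(0,0)}\equiv1$. *)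

theory Defs
  imports "HOL-Analysis.Analysis"
begin

definition is_scale :: "(nat \<Rightarrow> nat) \<Rightarrow> bool" where
  "is_scale s \<longleftrightarrow> s 0 = 1 \<and>
     (\<forall>m\<ge>1. 0 < s m \<and> s m dvd s (Suc m) \<and> s m < s (Suc m))"

text \<open>lcm of the s_m is finite iff some positive integer is divisible by all s_m.\<close>
definition lcm_infinite :: "(nat \<Rightarrow> nat) \<Rightarrow> bool" where
  "lcm_infinite s \<longleftrightarrow> \<not> (\<exists>N::nat. N > 0 \<and> (\<forall>m. s m dvd N))"

text \<open>Z_S as the inverse limit: compatible sequences of canonical residues y m \<in> {0..<s m},
  with y (m+1) \<equiv> y m mod s m. Index 0 is the trivial component Z/1Z. It carries the
  subspace topology of the product topology on nat \<Rightarrow> int.\<close>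
definition ZS :: "(nat \<Rightarrow> nat) \<Rightarrow> (nat \<Rightarrow> int) set" where
  "ZS s = {y. (\<forall>m. 0 \<le> y m \<and> y m < int (s m)) \<and>
               (\<forall>m. y (Suc m) mod int (s m) = y m mod int (s m))}"

text \<open>1_{(n,x)}: equals 1 at z iff s_n divides z - x, i.e. the image of z in Z/s_n Z is x mod s_n.\<close>
definition ind :: "(nat \<Rightarrow> nat) \<Rightarrow> nat \<Rightarrow> nat \<Rightarrow> (nat \<Rightarrow> int) \<Rightarrow> int" where
  "ind s n x z = (if int (s n) dvd (z n - int x) then 1 else 0)"

definition nidx :: "(nat \<Rightarrow> nat) \<Rightarrow> nat \<Rightarrow> nat" where
  "nidx s x = (THE n. n \<ge> 1 \<and> s (n - 1) \<le> x \<and> x < s n)"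

definition indx :: "(nat \<Rightarrow> nat) \<Rightarrow> nat \<Rightarrow> (nat \<Rightarrow> int) \<Rightarrow> int" where
  "indx s x = (if x = 0 then ind s 0 0 else ind s (nidx s x) x)"

end

theory Submission
  imports Defs "HOL-Library.Groups_Big_Fun"
begin

text \<open>
  A continuous integer-valued function on the compact space Z_S is locally constant, hence
  depends only on the coordinate at some level N, i.e. it is a combination of the indicators
  1_(N,r) with r < s_N. For r < s_n, the indicator 1_(n+1,r) is 1_(n,r) minus the indicators
  1_(n+1,t) = 1_(t) with t = r (mod s_n) and s_n \<le> t < s_(n+1); so induction on n writes every
  1_(n,r) as a combination of the 1_(x). Uniqueness: at the integer y we have 1_(y)(y) = 1 and
  1_(x)(y) = 0 for x > y, so evaluating at y = 0, 1, 2, ... determines the coefficients one by one.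
\<close>

section \<open>Cylinders in sequence spaces\<close>

lemma open_fun_contains_cylinder:
  fixes U :: "(nat \<Rightarrow> 'a::topological_space) set"
  assumes "open U" "z \<in> U"
  obtains N where "{w. \<forall>i\<le>N. w i = z i} \<subseteq> U"
proof -
  have "openin (product_topology (\<lambda>_. euclidean) UNIV) U"
    using assms(1) unfolding open_fun_def .
  from product_topology_open_contains_basis[OF this assms(2)] obtain X
    where X: "z \<in> Pi\<^sub>E UNIV X" "finite {i. X i \<noteq> topspace euclidean}" "Pi\<^sub>E UNIV X \<subseteq> U"
    by blast
  obtain N where N: "\<And>i. X i \<noteq> UNIV \<Longrightarrow> i \<le> N"
    using X(2) finite_nat_set_iff_bounded_le by auto
  have "{w. \<forall>i\<le>N. w i = z i} \<subseteq> Pi\<^sub>E UNIV X"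
    using X(1) N by (force simp: PiE_iff)
  then show ?thesis
    using X(3) by (intro that) (rule subset_trans)
qed

lemma open_cylinder: "open {w :: nat \<Rightarrow> 'a::discrete_topology. \<forall>i\<le>N. w i = z i}"
proof -
  have "open {w. \<forall>i\<in>{..N}. w (id i) \<in> {z i}}"
    by (rule product_topology_basis') (simp_all add: open_discrete)
  then show ?thesis
    by (simp add: Ball_def)
qed

lemma continuous_on_compact_discrete_depends_on_prefix:
  fixes f :: "(nat \<Rightarrow> 'a::discrete_topology) \<Rightarrow> 'b::discrete_topology"
  assumes "compact S" "continuous_on S f"
  obtains N where "\<And>w w'. w \<in> S \<Longrightarrow> w' \<in> S \<Longrightarrow> \<forall>i\<le>N. w i = w' i \<Longrightarrow> f w = f w'"
proof -
  have "\<forall>z\<in>S. \<exists>n. \<forall>w\<in>S. (\<forall>i\<le>n. w i = z i) \<longrightarrow> f w = f z"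
  proof
    fix z assume "z \<in> S"
    obtain A where A: "open A" "A \<inter> S = f -` {f z} \<inter> S"
      using continuous_on_open_invariant[THEN iffD1, OF assms(2), rule_format, OF open_discrete]
      by blast
    have "z \<in> A"
      using A(2) \<open>z \<in> S\<close> by blast
    with A(1) obtain n where "{w. \<forall>i\<le>n. w i = z i} \<subseteq> A"
      by (rule open_fun_contains_cylinder)
    with A(2) show "\<exists>n. \<forall>w\<in>S. (\<forall>i\<le>n. w i = z i) \<longrightarrow> f w = f z"
      by blast
  qed
  then obtain n where n: "\<forall>z\<in>S. \<forall>w\<in>S. (\<forall>i\<le>n z. w i = z i) \<longrightarrow> f w = f z"
    by (rule bchoice[THEN exE])
  have "S \<subseteq> (\<Union>z\<in>S. {w. \<forall>i\<le>n z. w i = z i})"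
    by blast
  then obtain C where C: "C \<subseteq> S" "finite C" "S \<subseteq> (\<Union>z\<in>C. {w. \<forall>i\<le>n z. w i = z i})"
    by (rule compactE_image[OF assms(1) open_cylinder])
  obtain N where N: "\<And>z. z \<in> C \<Longrightarrow> n z \<le> N"
    using C(2) finite_nat_set_iff_bounded_le[of "n ` C"] by auto
  show ?thesis
  proof (rule that)
    fix w w' assume w: "w \<in> S" "w' \<in> S" "\<forall>i\<le>N. w i = w' i"
    then obtain c where c: "c \<in> C" "\<forall>i\<le>n c. w i = c i"
      using C(3) by blast
    have "c \<in> S"
      using C(1) c(1) by blast
    have "n c \<le> N"
      using N c(1) .
    then have "\<forall>i\<le>n c. w' i = c i"
      using c(2) w(3) by auto
    then have "f w' = f c"
      using n \<open>c \<in> S\<close> w(2) by blast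
    moreover have "f w = f c"
      using n \<open>c \<in> S\<close> w(1) c(2) by blast
    ultimately show "f w = f w'"
      by simp
  qed
qed

section \<open>Scales\<close>

lemma scale_pos: "is_scale s \<Longrightarrow> 0 < s m"
  unfolding is_scale_def by (cases m) auto

lemma scale_dvd_mono:
  assumes "is_scale s" "m \<le> n"
  shows "s m dvd s n"
  using assms(2)
proof (induction rule: dec_induct)
  case (step k)
  have "s k dvd s (Suc k)"
    using assms(1) unfolding is_scale_def by (cases k) auto
  with step.IH show ?case
    by (rule dvd_trans)
qed simp

lemma scale_mono: "is_scale s \<Longrightarrow> m \<le> n \<Longrightarrow> s m \<le> s n"
  using scale_dvd_mono scale_pos by (simp add: dvd_imp_le)

lemma scale_ge_index:
  assumes "is_scale s"
  shows "m \<le> s m"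
proof (induction m)
  case (Suc m)
  show ?case
  proof (cases m)
    case 0
    then show ?thesis
      using scale_pos[OF assms, of 1] by simp
  next
    case (Suc k)
    then have "s m < s (Suc m)"
      using assms unfolding is_scale_def by simp
    with Suc.IH show ?thesis
      by simp
  qed
qed simp

lemma nidx_eqI:
  assumes "is_scale s" "1 \<le> n" "s (n - 1) \<le> x" "x < s n"
  shows "nidx s x = n"
  unfolding nidx_def
proof (rule the_equality)
  fix n' assume n': "1 \<le> n' \<and> s (n' - 1) \<le> x \<and> x < s n'"
  have "\<not> n' \<le> n - 1" "\<not> n \<le> n' - 1"
    using n' assms scale_mono[OF assms(1)] by (meson le_trans not_le)+
  then show "n' = n"
    by linarith
qed (use assms in simp)

lemma less_scale_nidx:
  assumes "is_scale s" "x \<noteq> 0"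
  shows "x < s (nidx s x)"
proof -
  define n where "n = (LEAST n. x < s n)"
  have x_less: "x < s n"
    unfolding n_def by (rule LeastI[of _ "Suc x"]) (use scale_ge_index[OF assms(1), of "Suc x"] in simp)
  have "n \<noteq> 0"
  proof
    assume "n = 0"
    with x_less assms show False
      by (simp add: is_scale_def)
  qed
  moreover have "s (n - 1) \<le> x"
    using not_less_Least[of "n - 1" "\<lambda>n. x < s n"] \<open>n \<noteq> 0\<close> unfolding n_def by linarith
  ultimately have "nidx s x = n"
    using nidx_eqI[OF assms(1)] x_less by simp
  with x_less show ?thesis
    by simp
qed

lemma indx_eq_ind_level:
  assumes "is_scale s"
  obtains n where "x < s n" "indx s x = ind s n x"
proof (cases "x = 0")
  case True
  with assms show ?thesis
    by (intro that[of 0]) (simp_all add: indx_def is_scale_def)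
next
  case False
  with less_scale_nidx[OF assms] show ?thesis
    by (intro that[of "nidx s x"]) (simp_all add: indx_def)
qed

section \<open>The space Z_S\<close>

lemma ZS_coord_bounds: "z \<in> ZS s \<Longrightarrow> 0 \<le> z m \<and> z m < int (s m)"
  unfolding ZS_def by blast

lemma ZS_coordE:
  assumes "z \<in> ZS s"
  obtains v where "z m = int v" "v < s m"
  using ZS_coord_bounds[OF assms, of m] by (metis nonneg_int_cases of_nat_less_iff)

lemma ZS_coord_mod:
  assumes "is_scale s" "z \<in> ZS s" "m \<le> n"
  shows "z m = z n mod int (s m)"
  using assms(3)
proof (induction rule: dec_induct)
  case base
  show ?case
    using ZS_coord_bounds[OF assms(2), of m] by simp
next
  case (step k)
  have "z (Suc k) mod int (s k) = z k"
    using assms(2) ZS_coord_bounds[OF assms(2), of k] unfolding ZS_def by auto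
  moreover have "int (s m) dvd int (s k)"
    using scale_dvd_mono[OF assms(1) step.hyps(1)] by simp
  ultimately show ?case
    using step.IH by (metis mod_mod_cancel)
qed

lemma compact_ZS: "compact (ZS s)"
proof -
  have "ZS s = Pi\<^sub>E UNIV (\<lambda>m. {0..<int (s m)}) \<inter>
      (\<Inter>m. {y. y (Suc m) mod int (s m) = y m mod int (s m)})"
    unfolding ZS_def by (auto simp: PiE_iff)
  moreover have "compact (Pi\<^sub>E UNIV (\<lambda>m. {0..<int (s m)}))"
    using compactin_PiE[of "\<lambda>_. euclidean" UNIV "\<lambda>m. {0..<int (s m)}"]
    by (simp add: euclidean_product_topology finite_imp_compact)
  moreover have "continuous_on UNIV ((\<lambda>i :: int. i mod c) \<circ> (\<lambda>y. y k))" for k c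
    by (rule continuous_on_compose) simp_all
  then have "continuous_on UNIV (\<lambda>y :: nat \<Rightarrow> int. y k mod c)" for k c
    by (simp add: o_def)
  then have "closed (\<Inter>m. {y :: nat \<Rightarrow> int. y (Suc m) mod int (s m) = y m mod int (s m)})"
    by (intro closed_INT ballI closed_Collect_eq)
  ultimately show ?thesis
    by (simp add: compact_Int_closed)
qed

lemma continuous_on_ZS_depends_on_level:
  fixes f :: "(nat \<Rightarrow> int) \<Rightarrow> int"
  assumes "is_scale s" "continuous_on (ZS s) f"
  obtains N where "\<And>w w'. w \<in> ZS s \<Longrightarrow> w' \<in> ZS s \<Longrightarrow> w N = w' N \<Longrightarrow> f w = f w'"
proof -
  obtain N where N: "\<And>w w'. w \<in> ZS s \<Longrightarrow> w' \<in> ZS s \<Longrightarrow> \<forall>i\<le>N. w i = w' i \<Longrightarrow> f w = f w'"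
    using continuous_on_compact_discrete_depends_on_prefix[OF compact_ZS assms(2)] by blast
  show ?thesis
  proof (rule that)
    fix w w' assume w: "w \<in> ZS s" "w' \<in> ZS s" "w N = w' N"
    then have "\<forall>i\<le>N. w i = w' i"
      using ZS_coord_mod[OF assms(1)] by metis
    with N w(1,2) show "f w = f w'" .
  qed
qed

definition ZS_of_nat :: "(nat \<Rightarrow> nat) \<Rightarrow> nat \<Rightarrow> nat \<Rightarrow> int" where
  "ZS_of_nat s r = (\<lambda>m. int (r mod s m))"

lemma ZS_of_nat_in_ZS:
  assumes "is_scale s"
  shows "ZS_of_nat s r \<in> ZS s"
proof -
  have "r mod s (Suc m) mod s m = r mod s m" for m
    using scale_dvd_mono[OF assms, of m "Suc m"] by (simp add: mod_mod_cancel)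
  then show ?thesis
    using scale_pos[OF assms] unfolding ZS_def ZS_of_nat_def by (simp flip: of_nat_mod)
qed

lemma ind_eq_if:
  assumes "z \<in> ZS s" "x < s n"
  shows "ind s n x z = (if z n = int x then 1 else 0)"
proof -
  have "int (s n) dvd z n - int x \<longleftrightarrow> z n mod int (s n) = int x mod int (s n)"
    by (simp add: mod_eq_dvd_iff)
  also have "\<dots> \<longleftrightarrow> z n = int x"
    using ZS_coord_bounds[OF assms(1), of n] assms(2) by simp
  finally show ?thesis
    unfolding ind_def by simp
qed

lemma indx_ZS_of_nat:
  assumes "is_scale s" "y \<le> x"
  shows "indx s x (ZS_of_nat s y) = (if x = y then 1 else 0)"
proof -
  obtain n where n: "x < s n" "indx s x = ind s n x"
    using indx_eq_ind_level[OF assms(1)] .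
  then have "ZS_of_nat s y n = int y"
    using assms(2) by (simp add: ZS_of_nat_def)
  with n assms show ?thesis
    using ind_eq_if[OF ZS_of_nat_in_ZS] by auto
qed

section \<open>Integer combinations of the indicators 1_(x)\<close>

lemma Sum_any_mult_eq_sum_support:
  fixes c :: "'a \<Rightarrow> 'b::semiring_0"
  assumes "finite {x. c x \<noteq> 0}"
  shows "Sum_any (\<lambda>x. c x * g x) = (\<Sum>x | c x \<noteq> 0. c x * g x)"
  by (rule Sum_any.expand_superset) (use assms in auto)

lemma finite_support_mult:
  fixes c :: "'a \<Rightarrow> 'b::semiring_0"
  shows "finite {x. c x \<noteq> 0} \<Longrightarrow> finite {x. c x * g x \<noteq> 0}"
  by (rule finite_subset[rotated]) auto

definition indx_span :: "(nat \<Rightarrow> nat) \<Rightarrow> ((nat \<Rightarrow> int) \<Rightarrow> int) set" where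
  "indx_span s = {g. \<exists>c. finite {x. c x \<noteq> 0} \<and> (\<forall>z\<in>ZS s. g z = Sum_any (\<lambda>x. c x * indx s x z))}"

lemma indx_in_span: "indx s x \<in> indx_span s"
proof -
  have "(if y = x then 1 else 0) * indx s y z = (if y = x then indx s y z else 0)" for y z
    by simp
  then show ?thesis
    unfolding indx_span_def by (intro CollectI exI[of _ "\<lambda>y. if y = x then 1 else 0"]) simp
qed

lemma indx_span_zero: "(\<lambda>z. 0) \<in> indx_span s"
  unfolding indx_span_def by (intro CollectI exI[of _ "\<lambda>_. 0"]) simp

lemma indx_span_add:
  assumes "g \<in> indx_span s" "h \<in> indx_span s"
  shows "(\<lambda>z. g z + h z) \<in> indx_span s"
proof -
  obtain c d where c: "finite {x. c x \<noteq> 0}" "\<forall>z\<in>ZS s. g z = Sum_any (\<lambda>x. c x * indx s x z)"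
    and d: "finite {x. d x \<noteq> 0}" "\<forall>z\<in>ZS s. h z = Sum_any (\<lambda>x. d x * indx s x z)"
    using assms unfolding indx_span_def by blast
  have "finite {x. c x + d x \<noteq> 0}"
    by (rule finite_subset[OF _ finite_UnI[OF c(1) d(1)]]) auto
  moreover have "g z + h z = Sum_any (\<lambda>x. (c x + d x) * indx s x z)" if "z \<in> ZS s" for z
    using that c d Sum_any.distrib[OF finite_support_mult finite_support_mult, OF c(1) d(1)]
    by (simp add: distrib_right)
  ultimately show ?thesis
    unfolding indx_span_def by (intro CollectI exI[of _ "\<lambda>x. c x + d x"]) simp
qed

lemma indx_span_scale:
  assumes "g \<in> indx_span s"
  shows "(\<lambda>z. k * g z) \<in> indx_span s"
proof -
  obtain c where c: "finite {x. c x \<noteq> 0}" "\<forall>z\<in>ZS s. g z = Sum_any (\<lambda>x. c x * indx s x z)"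
    using assms unfolding indx_span_def by blast
  have "finite {x. k * c x \<noteq> 0}"
    by (rule finite_subset[OF _ c(1)]) auto
  moreover have "k * g z = Sum_any (\<lambda>x. (k * c x) * indx s x z)" if "z \<in> ZS s" for z
    using that c Sum_any_right_distrib[OF finite_support_mult[OF c(1)], of k]
    by (simp add: mult.assoc)
  ultimately show ?thesis
    unfolding indx_span_def by (intro CollectI exI[of _ "\<lambda>x. k * c x"]) simp
qed

lemma indx_span_diff:
  assumes "g \<in> indx_span s" "h \<in> indx_span s"
  shows "(\<lambda>z. g z - h z) \<in> indx_span s"
  using indx_span_add[OF assms(1) indx_span_scale[OF assms(2), of "-1"]] by simp

lemma indx_span_sum:
  assumes "finite R" "\<And>r. r \<in> R \<Longrightarrow> g r \<in> indx_span s"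
  shows "(\<lambda>z. \<Sum>r\<in>R. g r z) \<in> indx_span s"
  using assms by (induction R rule: finite_induct) (simp_all add: indx_span_zero indx_span_add)

lemma indx_span_cong:
  assumes "g \<in> indx_span s" "\<And>z. z \<in> ZS s \<Longrightarrow> g z = h z"
  shows "h \<in> indx_span s"
  using assms unfolding indx_span_def by auto

lemma ind_eq_sum_next_level:
  assumes "is_scale s" "z \<in> ZS s" "r < s m"
  shows "ind s m r z = (\<Sum>t | t < s (Suc m) \<and> t mod s m = r. ind s (Suc m) t z)"
proof -
  obtain v where v: "z (Suc m) = int v" "v < s (Suc m)"
    using ZS_coordE[OF assms(2)] .
  have "z m = int (v mod s m)"
    using ZS_coord_mod[OF assms(1,2), of m "Suc m"] v(1) by (simp add: of_nat_mod)
  then have "ind s m r z = (if v mod s m = r then 1 else 0)"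
    using ind_eq_if[OF assms(2,3)] by simp
  also have "\<dots> = (\<Sum>t | t < s (Suc m) \<and> t mod s m = r. if v = t then 1 else 0)"
    using v(2) by (simp add: sum.delta)
  also have "\<dots> = (\<Sum>t | t < s (Suc m) \<and> t mod s m = r. ind s (Suc m) t z)"
    using ind_eq_if[OF assms(2)] v(1) by (intro sum.cong) auto
  finally show ?thesis .
qed

lemma indx_eq_ind_Suc:
  assumes "is_scale s" "s m \<le> r" "r < s (Suc m)"
  shows "indx s r = ind s (Suc m) r"
proof -
  have "r \<noteq> 0"
    using scale_pos[OF assms(1), of m] assms(2) by simp
  with nidx_eqI[OF assms(1), of "Suc m"] assms show ?thesis
    by (simp add: indx_def)
qed

lemma ind_in_indx_span:
  assumes "is_scale s" "r < s n"
  shows "ind s n r \<in> indx_span s"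
  using assms(2)
proof (induction n arbitrary: r)
  case 0
  then have "ind s 0 r = indx s 0"
    using assms(1) by (simp add: is_scale_def indx_def)
  then show ?case
    using indx_in_span[of s 0] by simp
next
  case (Suc m)
  show ?case
  proof (cases "s m \<le> r")
    case True
    then show ?thesis
      using indx_eq_ind_Suc[OF assms(1) True Suc.prems] indx_in_span[of s r] by simp
  next
    case False
    define R where "R = {t. t < s (Suc m) \<and> t mod s m = r}"
    have "ind s (Suc m) t \<in> indx_span s" if "t \<in> R - {r}" for t
    proof -
      have t: "t < s (Suc m)" "t mod s m = r" "t \<noteq> r"
        using that unfolding R_def by auto
      then have "s m \<le> t"
        by (metis mod_less not_le)
      then have "indx s t = ind s (Suc m) t"
        using t(1) by (rule indx_eq_ind_Suc[OF assms(1)])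
      then show ?thesis
        using indx_in_span[of s t] by simp
    qed
    then have "(\<lambda>z. ind s m r z - (\<Sum>t\<in>R - {r}. ind s (Suc m) t z)) \<in> indx_span s"
      using Suc.IH False by (intro indx_span_diff indx_span_sum) (simp_all add: R_def)
    moreover have "ind s m r z - (\<Sum>t\<in>R - {r}. ind s (Suc m) t z) = ind s (Suc m) r z"
      if "z \<in> ZS s" for z
    proof -
      have "r \<in> R"
        using False Suc.prems unfolding R_def by simp
      then have "(\<Sum>t\<in>R. ind s (Suc m) t z) = ind s (Suc m) r z + (\<Sum>t\<in>R - {r}. ind s (Suc m) t z)"
        by (intro sum.remove) (simp_all add: R_def)
      then show ?thesis
        using ind_eq_sum_next_level[OF assms(1) that, of r m] False unfolding R_def by simp
    qed
    ultimately show ?thesis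
      by (rule indx_span_cong)
  qed
qed

lemma continuous_on_ZS_in_indx_span:
  assumes "is_scale s" "continuous_on (ZS s) f"
  shows "f \<in> indx_span s"
proof -
  obtain N where N: "\<And>w w'. w \<in> ZS s \<Longrightarrow> w' \<in> ZS s \<Longrightarrow> w N = w' N \<Longrightarrow> f w = f w'"
    using continuous_on_ZS_depends_on_level[OF assms] by blast
  have "(\<lambda>z. \<Sum>r<s N. f (ZS_of_nat s r) * ind s N r z) \<in> indx_span s"
    using assms(1) by (intro indx_span_sum indx_span_scale ind_in_indx_span) auto
  moreover have "(\<Sum>r<s N. f (ZS_of_nat s r) * ind s N r z) = f z" if z: "z \<in> ZS s" for z
  proof -
    obtain v where v: "z N = int v" "v < s N"
      using ZS_coordE[OF z] .
    have "(\<Sum>r<s N. f (ZS_of_nat s r) * ind s N r z) = (\<Sum>r<s N. if r = v then f (ZS_of_nat s r) else 0)"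
      using ind_eq_if[OF z] v(1) by (intro sum.cong) auto
    also have "\<dots> = f (ZS_of_nat s v)"
      using v(2) by simp
    also have "\<dots> = f z"
      using N[OF ZS_of_nat_in_ZS[OF assms(1)] z] v by (simp add: ZS_of_nat_def)
    finally show ?thesis .
  qed
  ultimately show ?thesis
    by (rule indx_span_cong)
qed

section \<open>Uniqueness of the coefficients\<close>

lemma Sum_any_indx_at_ZS_of_nat:
  assumes "is_scale s"
  shows "Sum_any (\<lambda>x. c x * indx s x (ZS_of_nat s y)) = c y + (\<Sum>x<y. c x * indx s x (ZS_of_nat s y))"
proof -
  have "indx s x (ZS_of_nat s y) = 0" if "y < x" for x
    using indx_ZS_of_nat[OF assms, of y x] that by simp
  then have "Sum_any (\<lambda>x. c x * indx s x (ZS_of_nat s y)) = (\<Sum>x<Suc y. c x * indx s x (ZS_of_nat s y))"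
    by (intro Sum_any.expand_superset) (auto simp: less_Suc_eq_le, meson not_le)
  also have "\<dots> = c y + (\<Sum>x<y. c x * indx s x (ZS_of_nat s y))"
    using indx_ZS_of_nat[OF assms, of y y] by simp
  finally show ?thesis .
qed

lemma indx_coeffs_unique:
  assumes "is_scale s"
    and "\<And>z. z \<in> ZS s \<Longrightarrow> Sum_any (\<lambda>x. c x * indx s x z) = Sum_any (\<lambda>x. d x * indx s x z)"
  shows "c = d"
proof
  fix y
  show "c y = d y"
  proof (induction y rule: less_induct)
    case (less y)
    then have "(\<Sum>x<y. c x * indx s x (ZS_of_nat s y)) = (\<Sum>x<y. d x * indx s x (ZS_of_nat s y))"
      by simp
    with assms(2)[OF ZS_of_nat_in_ZS[OF assms(1), of y]] show ?case
      by (simp add: Sum_any_indx_at_ZS_of_nat[OF assms(1)])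
  qed
qed

theorem mainTheorem11:
  fixes s :: "nat \<Rightarrow> nat"
  assumes "is_scale s" and "lcm_infinite s"
  shows "\<forall>f :: (nat \<Rightarrow> int) \<Rightarrow> int. continuous_on (ZS s) f \<longrightarrow>
           (\<exists>!c :: nat \<Rightarrow> int. finite {x. c x \<noteq> 0} \<and>
              (\<forall>z\<in>ZS s. f z = (\<Sum>x\<in>{x. c x \<noteq> 0}. c x * indx s x z)))"
proof (intro allI impI)
  fix f :: "(nat \<Rightarrow> int) \<Rightarrow> int"
  assume "continuous_on (ZS s) f"
  then obtain c where c: "finite {x. c x \<noteq> 0}" "\<forall>z\<in>ZS s. f z = Sum_any (\<lambda>x. c x * indx s x z)"
    using continuous_on_ZS_in_indx_span[OF assms(1)] unfolding indx_span_def by blast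
  have c_repr: "\<forall>z\<in>ZS s. f z = (\<Sum>x\<in>{x. c x \<noteq> 0}. c x * indx s x z)"
    using c by (simp add: Sum_any_mult_eq_sum_support)
  have unique: "d = c" if d: "finite {x. d x \<noteq> 0}" "\<forall>z\<in>ZS s. f z = (\<Sum>x\<in>{x. d x \<noteq> 0}. d x * indx s x z)"
    for d
  proof (rule indx_coeffs_unique[OF assms(1)])
    fix z assume "z \<in> ZS s"
    then have "Sum_any (\<lambda>x. d x * indx s x z) = f z"
      using d by (simp add: Sum_any_mult_eq_sum_support)
    also have "\<dots> = Sum_any (\<lambda>x. c x * indx s x z)"
      using c(2) \<open>z \<in> ZS s\<close> by simp
    finally show "Sum_any (\<lambda>x. d x * indx s x z) = Sum_any (\<lambda>x. c x * indx s x z)" .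
  qed
  show "\<exists>!c. finite {x. c x \<noteq> 0} \<and> (\<forall>z\<in>ZS s. f z = (\<Sum>x\<in>{x. c x \<noteq> 0}. c x * indx s x z))"
    using c(1) c_repr unique by (intro ex1I[of _ c]) blast+
qed

end
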